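(* Assume $\Pi_\alpha\neq\emptyset$ and that Assumptions 1 and 2 (stated in the context) hold. Then any E-optimal policy $\pi^E$ satisfies, for almost every $x$, $$\pi^E(x)=\mathrm{clip}_\alpha\!\left(\frac{\sqrt{(v^\star)^\top\Sigma_1(x)v^\star}}{\sqrt{(v^\star)^\top\Sigma_1(x)v^\star}+\sqrt{(v^\star)^\top\Sigma_0(x)v^\star}}\right),$$ where $v^\star=v^\star(\pi^E)\in\mathbb R^{t_{\max}+1}$ is the unit eigenvector corresponding to $\lambda_{\max}(\Sigma_{\mathrm{eff}}(\pi^E))$.
   Context: Discrete horizon $\{0,\dots,t_{\max}\}$; unit $(X,A,T,C)$, $A\in\{0,1\}$, potential event times $T(a)$; observed $\mathcal O=(X,A,\widetilde T,\Delta)$, $\widetilde T=\min\{T,C\}$, $\Delta=\mathbf 1(T\le C)$. $S_t(x,a)=\mathbb P(T>t\mid X=x,A=a)$, $\lambda^S_t(x,a)=\mathbb P(\widetilde T=t,\Delta=1\mid\widetilde T\ge t,X=x,A=a)$, $\lambda^G_t(x,a)=\mathbb P(\widetilde T=t,\Delta=0\mid\widetilde T\ge t,X=x,A=a)$, $G_{t-1}=\prod_{i=0}^{t-1}(1-\lambda^G_i/(1-\lambda^S_i))$, $S_{-1}=G_{-1}\equiv1$; $\xi_t(\mathcal O)=\sum_{i=0}^t\frac{\mathbf 1(\widetilde T=i,\Delta=1)-\mathbf 1(\widetilde T\ge i)\lambda^S_i(X,A)}{S_i(X,A)G_{i-1}(X,A)}$. $\boldsymbol S(X,a)=(S_t(X,a))_{t=0}^{t_{\max}}$,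 $\boldsymbol\xi=(\xi_t(\mathcal O))_t$, $\tau_t=\mathbb E[S_t(X,1)-S_t(X,0)]$, $\boldsymbol\tau=(\tau_t)_t$, $b(X)=\boldsymbol S(X,1)-\boldsymbol S(X,0)-\boldsymbol\tau$. $\Sigma_a(x)=\mathrm{Var}(\boldsymbol S(X,a)\odot\boldsymbol\xi\mid X=x,A=a)$. For a policy $\pi$, $\Sigma_{\mathrm{eff}}(\pi)=\mathbb E[\Sigma_1(X)/\pi(X)+\Sigma_0(X)/(1-\pi(X))]+\mathbb E[b(X)b(X)^\top]$. $\Pi_\alpha=\{\pi:\alpha\le\pi(x)\le1-\alpha\ \forall x\}$, $\mathrm{clip}_\alpha(u)=\min\{1-\alpha,\max\{\alpha,u\}\}$. A policy $\pi^E$ is E-optimal if $\pi^E\in\arg\min_{\pi\in\Pi_\alpha}\lambda_{\max}(\Sigma_{\mathrm{eff}}(\pi))$, $\lambda_{\max}$ the largest eigenvalue. Assumption 1: $T(a)=T$ when $A=a$; $0<\pi(x)<1$ whenever $\mathbb P(X=x)>0$; $A\perp(T(0),T(1))\mid X$. Assumption 2: for $\mathbb P(X=x,A=a)>0$ and each horizon $t$: $G_{t-1}(x,a)>0$, $S_{t-1}(x,a)>0$, $T\perp C\mid X=x,A=a$. *)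

theory Defs
  imports "HOL-Probability.Probability" "Jordan_Normal_Form.Char_Poly"
begin

text \<open>Conditional law of the observed pair (Ttilde, Delta) given X = x, A = a,
  where T ~ QT x a and C ~ QC x a are conditionally independent (Assumption 2).\<close>

definition obs_pmf :: "nat pmf \<Rightarrow> nat pmf \<Rightarrow> (nat \<times> bool) pmf" where
  "obs_pmf PT PC = map_pmf (\<lambda>(t, c). (min t c, t \<le> c)) (pair_pmf PT PC)"

definition surv :: "nat pmf \<Rightarrow> nat \<Rightarrow> real" where
  "surv PT t = measure_pmf.prob PT {s. t < s}"

definition hazS :: "nat pmf \<Rightarrow> nat pmf \<Rightarrow> nat \<Rightarrow> real" where
  "hazS PT PC t = measure_pmf.prob (obs_pmf PT PC) {(s, d). s = t \<and> d}
                  / measure_pmf.prob (obs_pmf PT PC) {(s, d). t \<le> s}"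

definition hazG :: "nat pmf \<Rightarrow> nat pmf \<Rightarrow> nat \<Rightarrow> real" where
  "hazG PT PC t = measure_pmf.prob (obs_pmf PT PC) {(s, d). s = t \<and> \<not> d}
                  / measure_pmf.prob (obs_pmf PT PC) {(s, d). t \<le> s}"

text \<open>Shifted quantities: survS_m i = S_{i-1}, censG_m i = G_{i-1}, with S_{-1} = G_{-1} = 1.\<close>
definition survm :: "nat pmf \<Rightarrow> nat \<Rightarrow> real" where
  "survm PT i = (if i = 0 then 1 else surv PT (i - 1))"

definition censGm :: "nat pmf \<Rightarrow> nat pmf \<Rightarrow> nat \<Rightarrow> real" where
  "censGm PT PC i = (\<Prod>k<i. 1 - hazG PT PC k / (1 - hazS PT PC k))"

definition xi :: "nat pmf \<Rightarrow> nat pmf \<Rightarrow> nat \<Rightarrow> nat \<Rightarrow> bool \<Rightarrow> real" where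
  "xi PT PC t s d = (\<Sum>i\<le>t.
      ((if s = i \<and> d then 1 else 0) - (if i \<le> s then 1 else 0) * hazS PT PC i)
      / (surv PT i * censGm PT PC i))"

definition Sigma_cond :: "nat \<Rightarrow> nat pmf \<Rightarrow> nat pmf \<Rightarrow> real mat" where
  "Sigma_cond tmax PT PC = mat (Suc tmax) (Suc tmax) (\<lambda>(i, j).
     let Y = (\<lambda>k (s, d). surv PT k * xi PT PC k s d) in
     measure_pmf.expectation (obs_pmf PT PC) (\<lambda>ob. Y i ob * Y j ob)
     - measure_pmf.expectation (obs_pmf PT PC) (Y i)
       * measure_pmf.expectation (obs_pmf PT PC) (Y j))"

text \<open>Data-generating model: PX law of X; QT x a, QC x a the conditional laws of
  T and C given X = x, A = a (a = True means treatment 1).\<close>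

definition tau :: "'x measure \<Rightarrow> ('x \<Rightarrow> bool \<Rightarrow> nat pmf) \<Rightarrow> nat \<Rightarrow> real" where
  "tau PX QT t = (\<integral>x. surv (QT x True) t - surv (QT x False) t \<partial>PX)"

definition bvec :: "'x measure \<Rightarrow> ('x \<Rightarrow> bool \<Rightarrow> nat pmf) \<Rightarrow> 'x \<Rightarrow> nat \<Rightarrow> real" where
  "bvec PX QT x t = surv (QT x True) t - surv (QT x False) t - tau PX QT t"

definition Sigma_eff :: "nat \<Rightarrow> 'x measure \<Rightarrow> ('x \<Rightarrow> bool \<Rightarrow> nat pmf) \<Rightarrow> ('x \<Rightarrow> bool \<Rightarrow> nat pmf)
    \<Rightarrow> ('x \<Rightarrow> real) \<Rightarrow> real mat" where
  "Sigma_eff tmax PX QT QC \<pi> = mat (Suc tmax) (Suc tmax) (\<lambda>(i, j).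
     (\<integral>x. Sigma_cond tmax (QT x True) (QC x True) $$ (i, j) / \<pi> x
         + Sigma_cond tmax (QT x False) (QC x False) $$ (i, j) / (1 - \<pi> x) \<partial>PX)
     + (\<integral>x. bvec PX QT x i * bvec PX QT x j \<partial>PX))"

definition lambda_max :: "real mat \<Rightarrow> real" where
  "lambda_max M = Max {k. eigenvalue M k}"

definition Pi_alpha :: "'x measure \<Rightarrow> real \<Rightarrow> ('x \<Rightarrow> real) set" where
  "Pi_alpha PX \<alpha> = {\<pi> \<in> borel_measurable PX. \<forall>x\<in>space PX. \<alpha> \<le> \<pi> x \<and> \<pi> x \<le> 1 - \<alpha>}"

definition clip :: "real \<Rightarrow> real \<Rightarrow> real" where
  "clip \<alpha> u = min (1 - \<alpha>) (max \<alpha> u)"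

definition E_optimal :: "nat \<Rightarrow> 'x measure \<Rightarrow> ('x \<Rightarrow> bool \<Rightarrow> nat pmf) \<Rightarrow> ('x \<Rightarrow> bool \<Rightarrow> nat pmf)
    \<Rightarrow> real \<Rightarrow> ('x \<Rightarrow> real) \<Rightarrow> bool" where
  "E_optimal tmax PX QT QC \<alpha> \<pi>E \<longleftrightarrow> \<pi>E \<in> Pi_alpha PX \<alpha> \<and>
     (\<forall>\<pi>\<in>Pi_alpha PX \<alpha>. lambda_max (Sigma_eff tmax PX QT QC \<pi>E)
                          \<le> lambda_max (Sigma_eff tmax PX QT QC \<pi>))"

end

theory Submission
  imports Defs
begin

(* Let v be the top eigenvector of Sigma_eff(piE), assumed simple, and q_a(x) = v^T Sigma_a(x) v.
   Then pi |-> v^T Sigma_eff(pi) v is minimal at piE over Pi_alpha: if an admissible pi did better,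
   by convexity of p |-> 1/p the matrix Sigma_eff along the segment from piE towards pi is
   dominated by the linear interpolation, which lowers the form along v to first order, while the
   spectral gap keeps the directions orthogonal to v below lambda_max; so lambda_max would
   decrease, contradicting E-optimality. Up to a constant, v^T Sigma_eff(pi) v is the integral of
   q_1/pi + q_0/(1 - pi), and on [alpha, 1 - alpha] this integrand has the unique minimiser
   clip_alpha(sqrt q_1 / (sqrt q_1 + sqrt q_0)); hence piE is that value almost everywhere.
   Only the integrability of Sigma_a is needed: the probability-space, measurability and
   positivity hypotheses of theorem4 are not used (where S_i G_(i-1) vanishes, xi takes the junk
   value of a division by zero, and the scores stay bounded). *)

section \<open>Quadratic forms and the top eigenvalue of a symmetric matrix\<close>

text \<open>Vectors of \<open>\<real>\<^sup>n\<close> are modelled by functions \<open>nat \<Rightarrow> real\<close> of which only the first \<open>n\<close>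
  values matter: unlike \<open>real vec\<close>, this type carries the product topology, in which unit spheres
  are compact.\<close>

definition dotp :: "nat \<Rightarrow> (nat \<Rightarrow> real) \<Rightarrow> (nat \<Rightarrow> real) \<Rightarrow> real" where
  "dotp n x y = (\<Sum>i<n. x i * y i)"

definition bform :: "real mat \<Rightarrow> nat \<Rightarrow> (nat \<Rightarrow> real) \<Rightarrow> (nat \<Rightarrow> real) \<Rightarrow> real" where
  "bform A n x y = (\<Sum>i<n. \<Sum>j<n. x i * A $$ (i, j) * y j)"

definition mat_apply :: "real mat \<Rightarrow> nat \<Rightarrow> (nat \<Rightarrow> real) \<Rightarrow> nat \<Rightarrow> real" where
  "mat_apply A n y i = (\<Sum>j<n. A $$ (i, j) * y j)"

definition symmetric_upto :: "real mat \<Rightarrow> nat \<Rightarrow> bool" where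
  "symmetric_upto A n \<longleftrightarrow> (\<forall>i<n. \<forall>j<n. A $$ (i, j) = A $$ (j, i))"

lemma bform_eq_dotp_mat_apply: "bform A n x y = dotp n x (mat_apply A n y)"
  unfolding bform_def dotp_def mat_apply_def by (simp add: sum_distrib_left mult.assoc)

lemma dotp_commute: "dotp n x y = dotp n y x"
  unfolding dotp_def by (simp add: mult.commute)

lemma bform_commute:
  assumes "symmetric_upto A n"
  shows "bform A n x y = bform A n y x"
proof -
  have "bform A n x y = (\<Sum>j<n. \<Sum>i<n. x i * A $$ (i, j) * y j)"
    unfolding bform_def by (rule sum.swap)
  also have "\<dots> = bform A n y x" unfolding bform_def
    by (intro sum.cong refl)
      (use assms in \<open>auto simp: symmetric_upto_def mult.commute mult.left_commute\<close>)
  finally show ?thesis .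
qed

lemma bform_add_left: "bform A n (\<lambda>i. x i + y i) z = bform A n x z + bform A n y z"
  unfolding bform_def by (simp add: distrib_right sum.distrib)

lemma bform_add_right: "bform A n z (\<lambda>i. x i + y i) = bform A n z x + bform A n z y"
  unfolding bform_def by (simp add: distrib_left sum.distrib)

lemma bform_scale_left: "bform A n (\<lambda>i. c * x i) z = c * bform A n x z"
  unfolding bform_def by (simp add: sum_distrib_left mult.assoc)

lemma bform_scale_right: "bform A n z (\<lambda>i. c * x i) = c * bform A n z x"
  unfolding bform_def by (simp add: sum_distrib_left mult.left_commute)

lemma bform_diff:
  assumes "A \<in> carrier_mat n n" "C \<in> carrier_mat n n"
  shows "bform (A - C) n x y = bform A n x y - bform C n x y"
  unfolding bform_def using assms by (simp add: sum_subtractf[symmetric] algebra_simps)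

lemma symmetric_upto_minus:
  assumes "A \<in> carrier_mat n n" "C \<in> carrier_mat n n" "symmetric_upto A n" "symmetric_upto C n"
  shows "symmetric_upto (A - C) n"
  using assms unfolding symmetric_upto_def by simp

lemma dotp_add_left: "dotp n (\<lambda>i. x i + y i) z = dotp n x z + dotp n y z"
  unfolding dotp_def by (simp add: distrib_right sum.distrib)

lemma dotp_add_right: "dotp n z (\<lambda>i. x i + y i) = dotp n z x + dotp n z y"
  unfolding dotp_def by (simp add: distrib_left sum.distrib)

lemma dotp_scale_left: "dotp n (\<lambda>i. c * x i) z = c * dotp n x z"
  unfolding dotp_def by (simp add: sum_distrib_left mult.assoc)

lemma dotp_scale_right: "dotp n z (\<lambda>i. c * x i) = c * dotp n z x"
  unfolding dotp_def by (simp add: sum_distrib_left mult.left_commute)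

lemma dotp_cong: "(\<And>i. i < n \<Longrightarrow> x i = x' i) \<Longrightarrow> (\<And>i. i < n \<Longrightarrow> y i = y' i) \<Longrightarrow>
    dotp n x y = dotp n x' y'"
  unfolding dotp_def by (intro sum.cong) simp_all

lemma bform_cong: "(\<And>i. i < n \<Longrightarrow> x i = x' i) \<Longrightarrow> (\<And>i. i < n \<Longrightarrow> y i = y' i) \<Longrightarrow>
    bform A n x y = bform A n x' y'"
  unfolding bform_def by (intro sum.cong) simp_all

lemma bform_add_self:
  assumes "symmetric_upto A n"
  shows "bform A n (\<lambda>i. x i + y i) (\<lambda>i. x i + y i)
    = bform A n x x + 2 * bform A n x y + bform A n y y"
  using bform_commute[OF assms, of y x] by (simp add: bform_add_left bform_add_right)

lemma dotp_add_self:
  "dotp n (\<lambda>i. x i + y i) (\<lambda>i. x i + y i) = dotp n x x + 2 * dotp n x y + dotp n y y"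
  using dotp_commute[of n y x] by (simp add: dotp_add_left dotp_add_right)

lemma dotp_self_nonneg: "0 \<le> dotp n x x"
  unfolding dotp_def by (simp add: sum_nonneg)

lemma dotp_self_eq_0D: "dotp n x x = 0 \<Longrightarrow> i < n \<Longrightarrow> x i = 0"
  unfolding dotp_def by (subst (asm) sum_nonneg_eq_0_iff) auto

lemma square_le_dotp_self: "i < n \<Longrightarrow> x i * x i \<le> dotp n x x"
  unfolding dotp_def by (rule member_le_sum) auto

lemma bform_self_eq_0: "dotp n x x = 0 \<Longrightarrow> bform A n x x = 0"
  unfolding bform_def using dotp_self_eq_0D[of n x] by simp

lemma abs_bform_self_le: "\<bar>bform A n x x\<bar> \<le> (\<Sum>i<n. \<Sum>j<n. \<bar>A $$ (i, j)\<bar>) * dotp n x x"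
proof -
  have "\<bar>bform A n x x\<bar> \<le> (\<Sum>i<n. \<Sum>j<n. \<bar>x i * A $$ (i, j) * x j\<bar>)"
    unfolding bform_def by (rule order_trans[OF sum_abs sum_mono[OF sum_abs]])
  also have "\<dots> \<le> (\<Sum>i<n. \<Sum>j<n. \<bar>A $$ (i, j)\<bar> * dotp n x x)"
  proof (intro sum_mono)
    fix i j assume "i \<in> {..<n}" "j \<in> {..<n}"
    then have "x i * x i \<le> dotp n x x" "x j * x j \<le> dotp n x x"
      by (auto intro: square_le_dotp_self)
    moreover have "2 * \<bar>x i * x j\<bar> \<le> x i * x i + x j * x j"
      using sum_squares_bound[of "\<bar>x i\<bar>" "\<bar>x j\<bar>"] by (simp add: abs_mult power2_eq_square)
    ultimately have "\<bar>x i * x j\<bar> \<le> dotp n x x" by linarith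
    from mult_left_mono[OF this abs_ge_zero[of "A $$ (i, j)"]]
    show "\<bar>x i * A $$ (i, j) * x j\<bar> \<le> \<bar>A $$ (i, j)\<bar> * dotp n x x"
      by (simp add: abs_mult algebra_simps)
  qed
  also have "\<dots> = (\<Sum>i<n. \<Sum>j<n. \<bar>A $$ (i, j)\<bar>) * dotp n x x"
    by (simp add: sum_distrib_right)
  finally show ?thesis .
qed

lemma two_mult_dotp_le:
  assumes "\<delta> > 0"
  shows "2 * a * dotp n x y \<le> \<delta> * (a * a) * dotp n y y + dotp n x x / \<delta>"
proof -
  have "2 * a * (x i * y i) \<le> \<delta> * (a * a) * (y i * y i) + x i * x i / \<delta>" for i
  proof -
    have "0 \<le> (\<delta> * a * y i - x i) * (\<delta> * a * y i - x i) / \<delta>" using assms by simp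
    also have "\<dots> = \<delta> * (a * a) * (y i * y i) + x i * x i / \<delta> - 2 * a * (x i * y i)"
      using assms by (simp add: field_simps)
    finally show ?thesis by simp
  qed
  then have "(\<Sum>i<n. 2 * a * (x i * y i))
      \<le> (\<Sum>i<n. \<delta> * (a * a) * (y i * y i) + x i * x i / \<delta>)"
    by (intro sum_mono)
  then show ?thesis
    unfolding dotp_def by (simp add: sum.distrib sum_distrib_left sum_divide_distrib)
qed

lemma linear_coeff_eq_0:
  fixes c d :: real
  assumes "\<And>s. 0 \<le> 2 * s * c + s * s * d"
  shows "c = 0"
proof (rule ccontr)
  assume "c \<noteq> 0"
  define D where "D = \<bar>d\<bar> + 1"
  have D: "D > 0" "d < D" unfolding D_def by auto
  have "0 \<le> (2 * (- c / D) * c + (- c / D) * (- c / D) * d) * (D * D)"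
    using assms[of "- c / D"] D by simp
  also have "\<dots> = c * c * (d - 2 * D)"
    using D by (simp add: field_simps)
  also have "\<dots> < 0"
  proof (rule mult_pos_neg)
    show "0 < c * c" using \<open>c \<noteq> 0\<close> zero_less_power2[of c] by (simp add: power2_eq_square)
  qed (use D in auto)
  finally show False by simp
qed

definition unit_fun :: "nat \<Rightarrow> nat \<Rightarrow> real" where
  "unit_fun k i = (if i = k then 1 else 0)"

lemma unit_fun_same [simp]: "unit_fun k k = 1"
  by (simp add: unit_fun_def)

lemma sum_unit_fun: "k < n \<Longrightarrow> (\<Sum>i<n. f i * unit_fun k i) = f k"
proof -
  assume "k < n"
  have "(\<Sum>i<n. f i * unit_fun k i) = (\<Sum>i<n. if i = k then f k else 0)"
    by (rule sum.cong) (auto simp: unit_fun_def)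
  with \<open>k < n\<close> show ?thesis by simp
qed

lemma dotp_unit_fun_right: "k < n \<Longrightarrow> dotp n x (unit_fun k) = x k"
  unfolding dotp_def by (rule sum_unit_fun)

lemma dotp_unit_fun_left: "k < n \<Longrightarrow> dotp n (unit_fun k) x = x k"
  using dotp_unit_fun_right[of k n x] by (simp add: dotp_commute)

lemma mat_apply_unit_fun: "k < n \<Longrightarrow> mat_apply A n (unit_fun k) i = A $$ (i, k)"
  unfolding mat_apply_def by (rule sum_unit_fun)

lemma dotp_unit_fun_self: "k < n \<Longrightarrow> dotp n (unit_fun k) (unit_fun k) = 1"
  by (simp add: dotp_unit_fun_right unit_fun_def)

lemma bform_unit_fun_self: "k < n \<Longrightarrow> bform A n (unit_fun k) (unit_fun k) = A $$ (k, k)"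
  by (simp add: bform_eq_dotp_mat_apply dotp_unit_fun_left mat_apply_unit_fun)

text \<open>Perturbing the maximiser \<open>u\<close> along the \<open>k\<close>-th coordinate axis gives a nonnegative quadratic
  in the step \<open>s\<close>, whose linear term must therefore vanish.\<close>

lemma form_maximiser_eigen:
  assumes A: "symmetric_upto A n" and k: "k < n"
    and bound: "\<And>w. bform A n w w \<le> m * dotp n w w"
    and eq: "bform A n u u = m * dotp n u u"
  shows "mat_apply A n u k = m * u k"
proof -
  have Aue: "bform A n u (unit_fun k) = mat_apply A n u k"
    using bform_commute[OF A, of u] by (simp add: bform_eq_dotp_mat_apply dotp_unit_fun_left k)
  have "0 \<le> 2 * s * (m * u k - mat_apply A n u k) + s * s * (m - A $$ (k, k))" for s
    using bound[of "\<lambda>i. u i + s * unit_fun k i"]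
    unfolding bform_add_self[OF A] dotp_add_self
    by (simp add: bform_scale_left bform_scale_right dotp_scale_left dotp_scale_right Aue eq k
        bform_unit_fun_self dotp_unit_fun_self dotp_unit_fun_right algebra_simps)
  from linear_coeff_eq_0[OF this] show ?thesis by simp
qed

lemma continuous_on_dotp:
  assumes "\<And>i. continuous_on UNIV (\<lambda>u. f u i)" "\<And>i. continuous_on UNIV (\<lambda>u. g u i)"
  shows "continuous_on UNIV (\<lambda>u::nat \<Rightarrow> real. dotp n (f u) (g u))"
  unfolding dotp_def by (intro continuous_intros assms)

lemma continuous_on_bform_self: "continuous_on UNIV (\<lambda>u::nat \<Rightarrow> real. bform A n u u)"
  unfolding bform_def by (intro continuous_intros continuous_on_product_coordinates)

definition sphere_orth :: "nat \<Rightarrow> (nat \<Rightarrow> real) \<Rightarrow> (nat \<Rightarrow> real) set" where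
  "sphere_orth n v = {u. (\<forall>i\<ge>n. u i = 0) \<and> dotp n u u = 1 \<and> dotp n v u = 0}"

lemma compact_sphere_orth: "compact (sphere_orth n v)"
proof -
  define B where "B = PiE UNIV (\<lambda>i. if i < n then {-1..1::real} else {0})"
  have "compactin (product_topology (\<lambda>i. euclidean) UNIV) B"
    unfolding B_def by (subst compactin_PiE) auto
  then have B: "compact B" by (simp add: euclidean_product_topology)
  have "continuous_on UNIV (\<lambda>u. dotp n u u)" "continuous_on UNIV (\<lambda>u. dotp n v u)"
    by (intro continuous_on_dotp continuous_on_const continuous_on_product_coordinates)+
  then have C: "closed ({u. dotp n u u = 1} \<inter> {u. dotp n v u = 0})"
    by (intro closed_Int closed_Collect_eq continuous_on_const)
  have "sphere_orth n v = ({u. dotp n u u = 1} \<inter> {u. dotp n v u = 0}) \<inter> B"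
  proof (intro equalityI subsetI)
    fix u assume u: "u \<in> sphere_orth n v"
    have "u i \<in> (if i < n then {-1..1} else {0})" for i
    proof (cases "i < n")
      case True
      have "u i * u i \<le> 1 * 1"
        using square_le_dotp_self[OF True, of u] u by (simp add: sphere_orth_def)
      then have "\<bar>u i\<bar> \<le> 1"
        using abs_le_square_iff[of "u i" 1] by (simp add: power2_eq_square)
      with True show ?thesis by (simp add: abs_le_iff)
    next
      case False
      with u show ?thesis by (simp add: sphere_orth_def)
    qed
    then have "u \<in> B" unfolding B_def by (simp add: PiE_iff)
    with u show "u \<in> ({u. dotp n u u = 1} \<inter> {u. dotp n v u = 0}) \<inter> B"
      by (simp add: sphere_orth_def)
  next
    fix u assume u: "u \<in> ({u. dotp n u u = 1} \<inter> {u. dotp n v u = 0}) \<inter> B"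
    have "u i = 0" if "n \<le> i" for i
    proof -
      have "u \<in> B" using u by blast
      then have "u i \<in> (if i < n then {-1..1} else {0})"
        unfolding B_def by (rule PiE_mem) simp
      with that show ?thesis by simp
    qed
    with u show "u \<in> sphere_orth n v"
      unfolding sphere_orth_def by simp
  qed
  with B C show ?thesis by (simp add: closed_Int_compact)
qed

lemma sphere_orth_scaled:
  assumes "dotp n v w = 0" "dotp n w w \<noteq> 0"
  shows "(\<lambda>i. if i < n then w i / sqrt (dotp n w w) else 0) \<in> sphere_orth n v"
    (is "?u \<in> _")
proof -
  define c where "c = 1 / sqrt (dotp n w w)"
  have cc: "c * c * dotp n w w = 1"
    using assms(2) dotp_self_nonneg[of n w] by (simp add: c_def)
  have u: "dotp n y ?u = dotp n y (\<lambda>i. c * w i)" for y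
    by (rule dotp_cong) (simp_all add: c_def)
  have "dotp n ?u ?u = c * c * dotp n w w"
    by (simp only: u dotp_commute[of n ?u] dotp_scale_right)
  with assms(1) cc show ?thesis
    unfolding sphere_orth_def by (simp add: u dotp_scale_right)
qed

lemma bform_le_from_sphere_orth:
  assumes "\<And>u. u \<in> sphere_orth n v \<Longrightarrow> bform A n u u \<le> c" and "dotp n v w = 0"
  shows "bform A n w w \<le> c * dotp n w w"
proof (cases "dotp n w w = 0")
  case True
  then show ?thesis by (simp add: bform_self_eq_0)
next
  case False
  define s where "s = 1 / sqrt (dotp n w w)"
  have ss: "s * s * dotp n w w = 1"
    using False dotp_self_nonneg[of n w] by (simp add: s_def)
  have "bform A n (\<lambda>i. if i < n then w i / sqrt (dotp n w w) else 0)
      (\<lambda>i. if i < n then w i / sqrt (dotp n w w) else 0) = bform A n (\<lambda>i. s * w i) (\<lambda>i. s * w i)"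
    by (rule bform_cong) (simp_all add: s_def)
  then have "s * s * bform A n w w \<le> c"
    using assms(1)[OF sphere_orth_scaled[OF assms(2) False]]
    by (simp add: bform_scale_left bform_scale_right)
  then have "s * s * bform A n w w * dotp n w w \<le> c * dotp n w w"
    using dotp_self_nonneg[of n w] by (rule mult_right_mono)
  moreover have "s * s * bform A n w w * dotp n w w = (s * s * dotp n w w) * bform A n w w"
    by (simp only: ac_simps)
  ultimately show ?thesis using ss by simp
qed

lemma bform_attains_max:
  assumes "0 < n"
  obtains u where "dotp n u u = 1" "\<And>w. bform A n w w \<le> bform A n u u * dotp n w w"
proof -
  have "unit_fun 0 \<in> sphere_orth n (\<lambda>_. 0)"
    using assms by (simp add: sphere_orth_def dotp_unit_fun_self) (simp add: dotp_def unit_fun_def)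
  then obtain u where u: "u \<in> sphere_orth n (\<lambda>_. 0)"
    and max: "\<forall>y\<in>sphere_orth n (\<lambda>_. 0). bform A n y y \<le> bform A n u u"
    using continuous_attains_sup[OF compact_sphere_orth _
        continuous_on_subset[OF continuous_on_bform_self subset_UNIV]] by blast
  show ?thesis
  proof (rule that)
    show "dotp n u u = 1" using u by (simp add: sphere_orth_def)
    show "bform A n w w \<le> bform A n u u * dotp n w w" for w
      using max by (intro bform_le_from_sphere_orth[of n "\<lambda>_. 0"]) (simp_all add: dotp_def)
  qed
qed

lemma bform_eigen_right:
  assumes "\<forall>i<n. mat_apply A n v i = k * v i"
  shows "bform A n w v = k * dotp n w v"
proof -
  have "dotp n w (mat_apply A n v) = dotp n w (\<lambda>i. k * v i)"
    unfolding dotp_def using assms by (intro sum.cong) auto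
  then show ?thesis by (simp add: bform_eq_dotp_mat_apply dotp_scale_right)
qed

lemma orthogonal_split:
  assumes A: "symmetric_upto A n" and v: "dotp n v v = 1"
    and a: "a = dotp n v w" and r: "r = (\<lambda>i. w i - a * v i)"
  shows "dotp n v r = 0" and "dotp n w w = a * a + dotp n r r"
    and "bform A n w w = a * a * bform A n v v + 2 * a * dotp n r (mat_apply A n v) + bform A n r r"
proof -
  have w: "w = (\<lambda>i. a * v i + r i)" by (simp add: r)
  have "r = (\<lambda>i. w i + (- a) * v i)" by (simp add: r)
  then show vr: "dotp n v r = 0"
    by (simp only: dotp_add_right dotp_scale_right) (simp add: v a)
  show "dotp n w w = a * a + dotp n r r"
    by (subst (1 2) w) (simp add: dotp_add_self dotp_scale_left dotp_scale_right v vr)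
  have "bform A n v r = dotp n r (mat_apply A n v)"
    using bform_commute[OF A, of v r] by (simp add: bform_eq_dotp_mat_apply)
  then show "bform A n w w = a * a * bform A n v v + 2 * a * dotp n r (mat_apply A n v) + bform A n r r"
    by (subst (1 2) w) (simp add: bform_add_self[OF A] bform_scale_left bform_scale_right)
qed

lemma mult_mat_vec_nth_eq_mat_apply:
  assumes "A \<in> carrier_mat n n" "v \<in> carrier_vec n" "i < n"
  shows "vec_index (A *\<^sub>v v) i = mat_apply A n (vec_index v) i"
  using assms unfolding mat_apply_def by (simp add: scalar_prod_def atLeast0LessThan)

lemma scalar_prod_eq_dotp: "dim_vec w = n \<Longrightarrow> v \<bullet> w = dotp n (vec_index v) (vec_index w)"
  unfolding scalar_prod_def dotp_def by (simp add: atLeast0LessThan)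

lemma scalar_prod_mult_mat_vec_eq_bform:
  assumes "A \<in> carrier_mat n n" "v \<in> carrier_vec n"
  shows "v \<bullet> (A *\<^sub>v v) = bform A n (vec_index v) (vec_index v)"
proof -
  have "v \<bullet> (A *\<^sub>v v) = dotp n (vec_index v) (vec_index (A *\<^sub>v v))"
    using assms by (intro scalar_prod_eq_dotp) simp
  also have "\<dots> = dotp n (vec_index v) (mat_apply A n (vec_index v))"
    unfolding dotp_def using mult_mat_vec_nth_eq_mat_apply[OF assms] by simp
  finally show ?thesis by (simp add: bform_eq_dotp_mat_apply)
qed

lemma eigenvector_carrier_vec:
  "A \<in> carrier_mat n n \<Longrightarrow> eigenvector A v k \<Longrightarrow> v \<in> carrier_vec n"
  unfolding eigenvector_def by auto

lemma eigenvector_mat_apply: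
  assumes "A \<in> carrier_mat n n" "eigenvector A v k"
  shows "\<forall>i<n. mat_apply A n (vec_index v) i = k * vec_index v i"
proof (intro allI impI)
  fix i assume "i < n"
  have "vec_index (A *\<^sub>v v) i = vec_index (k \<cdot>\<^sub>v v) i"
    using assms(2) unfolding eigenvector_def by simp
  then show "mat_apply A n (vec_index v) i = k * vec_index v i"
    using mult_mat_vec_nth_eq_mat_apply[OF assms(1) eigenvector_carrier_vec[OF assms] \<open>i < n\<close>]
      eigenvector_carrier_vec[OF assms] \<open>i < n\<close> by simp
qed

lemma eigenvector_dotp_pos:
  assumes "A \<in> carrier_mat n n" "eigenvector A v k"
  shows "0 < dotp n (vec_index v) (vec_index v)"
proof -
  have v: "v \<in> carrier_vec n" by (rule eigenvector_carrier_vec[OF assms])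
  have "dotp n (vec_index v) (vec_index v) \<noteq> 0"
  proof
    assume "dotp n (vec_index v) (vec_index v) = 0"
    then have "v = 0\<^sub>v n" using v dotp_self_eq_0D[of n "vec_index v"] by (intro eq_vecI) simp_all
    then show False using assms unfolding eigenvector_def by auto
  qed
  then show ?thesis using dotp_self_nonneg[of n "vec_index v"] by linarith
qed

lemma eigenvector_of_mat_apply:
  assumes A: "A \<in> carrier_mat n n"
    and eq: "\<forall>i<n. mat_apply A n u i = k * u i" and pos: "0 < dotp n u u"
  shows "eigenvector A (vec n u) k"
  unfolding eigenvector_def
proof (intro conjI)
  show "vec n u \<in> carrier_vec (dim_row A)" using A by simp
  show "vec n u \<noteq> 0\<^sub>v (dim_row A)"
  proof
    assume "vec n u = 0\<^sub>v (dim_row A)"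
    then have "dotp n u u = dotp n (vec_index (0\<^sub>v n)) (vec_index (0\<^sub>v n))"
      using A by (intro dotp_cong) (metis carrier_matD(1) index_vec)+
    with pos show False by (simp add: dotp_def)
  qed
  show "A *\<^sub>v vec n u = k \<cdot>\<^sub>v vec n u"
  proof (rule eq_vecI)
    fix j assume "j < dim_vec (k \<cdot>\<^sub>v vec n u)"
    then have j: "j < n" by simp
    have "mat_apply A n (vec_index (vec n u)) j = mat_apply A n u j"
      unfolding mat_apply_def by (intro sum.cong) simp_all
    then show "vec_index (A *\<^sub>v vec n u) j = vec_index (k \<cdot>\<^sub>v vec n u) j"
      using mult_mat_vec_nth_eq_mat_apply[OF A _ j, of "vec n u"] eq j by simp
  qed (use A in simp)
qed

lemma simple_eigenvalue_mat_apply: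
  fixes A :: "real mat" and v :: "real vec"
  assumes A: "A \<in> carrier_mat n n" and v: "eigenvector A v k"
    and simple: "\<And>w. eigenvector A w k \<Longrightarrow> \<exists>c. w = c \<cdot>\<^sub>v v"
    and u: "\<forall>i<n. mat_apply A n u i = k * u i"
  shows "\<exists>c. \<forall>i<n. u i = c * vec_index v i"
proof (cases "0 < dotp n u u")
  case True
  then obtain c where c: "vec n u = c \<cdot>\<^sub>v v"
    using simple[OF eigenvector_of_mat_apply[OF A u]] by blast
  have "u i = c * vec_index v i" if "i < n" for i
    using arg_cong[OF c, of "\<lambda>x. vec_index x i"] that eigenvector_carrier_vec[OF A v] by simp
  then show ?thesis by blast
next
  case False
  then have "dotp n u u = 0" using dotp_self_nonneg[of n u] by linarith
  then show ?thesis using dotp_self_eq_0D by (intro exI[of _ 0]) auto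
qed

lemma finite_eigenvalues:
  assumes "(A :: real mat) \<in> carrier_mat n n"
  shows "finite {k. eigenvalue A k}"
proof -
  have "char_poly A \<noteq> 0"
    using degree_monic_char_poly[OF assms] by auto
  then have "finite {k. poly (char_poly A) k = 0}" by (rule poly_roots_finite)
  then show ?thesis using eigenvalue_root_char_poly[OF assms] by simp
qed

lemma symmetric_top_eigenvalue:
  assumes A: "A \<in> carrier_mat n n" "symmetric_upto A n" and "0 < n"
  obtains m where "eigenvalue A m" "\<And>w. bform A n w w \<le> m * dotp n w w"
proof -
  obtain u where u: "dotp n u u = 1" and max: "\<And>w. bform A n w w \<le> bform A n u u * dotp n w w"
    using bform_attains_max[OF \<open>0 < n\<close>] by blast
  have "\<forall>i<n. mat_apply A n u i = bform A n u u * u i"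
    using form_maximiser_eigen[OF A(2) _ max] u by simp
  then have "eigenvector A (vec n u) (bform A n u u)"
    by (rule eigenvector_of_mat_apply[OF A(1)]) (simp add: u)
  then have "eigenvalue A (bform A n u u)"
    unfolding eigenvalue_def by blast
  with max show ?thesis using that by blast
qed

lemma eigenvalue_le_lambda_max:
  "A \<in> carrier_mat n n \<Longrightarrow> eigenvalue A k \<Longrightarrow> k \<le> lambda_max A"
  unfolding lambda_max_def using finite_eigenvalues by auto

lemma eigenvalue_lambda_max:
  assumes "A \<in> carrier_mat n n" "symmetric_upto A n" "0 < n"
  shows "eigenvalue A (lambda_max A)"
proof -
  obtain m where "eigenvalue A m" using symmetric_top_eigenvalue[OF assms] by blast
  then show ?thesis
    unfolding lambda_max_def using Max_in[OF finite_eigenvalues[OF assms(1)]] by auto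
qed

lemma bform_le_lambda_max:
  assumes "A \<in> carrier_mat n n" "symmetric_upto A n" "0 < n"
  shows "bform A n w w \<le> lambda_max A * dotp n w w"
proof -
  obtain m where m: "eigenvalue A m" "\<And>w. bform A n w w \<le> m * dotp n w w"
    using symmetric_top_eigenvalue[OF assms] by blast
  have "m * dotp n w w \<le> lambda_max A * dotp n w w"
    using eigenvalue_le_lambda_max[OF assms(1) m(1)] dotp_self_nonneg[of n w]
    by (rule mult_right_mono)
  with m(2)[of w] show ?thesis by linarith
qed

lemma lambda_max_less:
  assumes "A \<in> carrier_mat n n" "symmetric_upto A n" "0 < n"
    and less: "\<And>w. 0 < dotp n w w \<Longrightarrow> bform A n w w < c * dotp n w w"
  shows "lambda_max A < c"
proof -
  obtain v where v: "eigenvector A v (lambda_max A)"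
    using eigenvalue_lambda_max[OF assms(1-3)] unfolding eigenvalue_def by blast
  have pos: "0 < dotp n (vec_index v) (vec_index v)" by (rule eigenvector_dotp_pos[OF assms(1) v])
  have "lambda_max A * dotp n (vec_index v) (vec_index v) < c * dotp n (vec_index v) (vec_index v)"
    using less[OF pos] bform_eigen_right[OF eigenvector_mat_apply[OF assms(1) v]] by simp
  with pos show ?thesis by simp
qed

section \<open>Perturbing a simple top eigenvalue\<close>

text \<open>The maximum of the Rayleigh quotient on the orthogonal complement of \<open>v\<close> is attained by
  compactness; it is below \<open>lambda_max A\<close>, as a maximiser of value \<open>lambda_max A\<close> would be a second,
  independent top eigenvector.\<close>

lemma spectral_gap:
  assumes A: "A \<in> carrier_mat n n" "symmetric_upto A n" "0 < n" and v: "dotp n v v = 1"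
    and simple: "\<And>u. \<forall>i<n. mat_apply A n u i = lambda_max A * u i \<Longrightarrow> \<exists>c. \<forall>i<n. u i = c * v i"
  obtains g where "0 < g" "\<And>r. dotp n v r = 0 \<Longrightarrow> bform A n r r \<le> (lambda_max A - g) * dotp n r r"
proof (cases "sphere_orth n v = {}")
  case True
  show ?thesis
  proof (rule that[of 1])
    show "bform A n r r \<le> (lambda_max A - 1) * dotp n r r" if "dotp n v r = 0" for r
      using that True by (intro bform_le_from_sphere_orth) auto
  qed simp
next
  case False
  obtain u where u: "u \<in> sphere_orth n v"
    and max: "\<forall>y\<in>sphere_orth n v. bform A n y y \<le> bform A n u u"
    using continuous_attains_sup[OF compact_sphere_orth False
        continuous_on_subset[OF continuous_on_bform_self subset_UNIV]] by blast
  have u1: "dotp n u u = 1" and uv: "dotp n v u = 0"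
    using u by (auto simp: sphere_orth_def)
  have "bform A n u u < lambda_max A"
  proof (rule ccontr)
    assume "\<not> bform A n u u < lambda_max A"
    with bform_le_lambda_max[OF A, of u] u1
    have "bform A n u u = lambda_max A * dotp n u u" by simp
    with form_maximiser_eigen[OF A(2) _ bform_le_lambda_max[OF A]]
    obtain c where c: "\<forall>i<n. u i = c * v i" using simple by blast
    then have "dotp n v u = c * dotp n v v" and "dotp n u u = c * c * dotp n v v"
      unfolding dotp_def by (auto simp: sum_distrib_left algebra_simps intro!: sum.cong)
    with u1 uv v show False by simp
  qed
  with max show ?thesis
    using that[of "lambda_max A - bform A n u u"] bform_le_from_sphere_orth[of n v A] by auto
qed

lemma mult_square_neg_less:
  fixes a t \<beta> g R :: real
  assumes "0 < t" "\<beta> < 0" "0 < g" "0 \<le> R" "0 < a * a + R"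
  shows "t * (a * a * \<beta>) < g * R"
proof (cases "a = 0")
  case True
  with assms show ?thesis by (simp add: mult_pos_pos)
next
  case False
  then have "0 < a * a" using zero_less_power2[of a] by (simp add: power2_eq_square)
  then have "t * (a * a * \<beta>) < 0"
    using mult_pos_neg[OF assms(1) mult_pos_neg[OF _ assms(2)]] by blast
  moreover have "0 \<le> g * R" using assms(3,4) by simp
  ultimately show ?thesis by linarith
qed

text \<open>The step size for \<open>lambda_max_perturb_less\<close>: there \<open>a\<close> is the component of a vector along the
  top eigenvector \<open>v\<close>, \<open>R\<close> the squared norm of its orthogonal part \<open>r\<close>, \<open>X = r \<bullet> B v\<close> the cross
  term (bounded by AM-GM) and \<open>Y\<close> the form of \<open>B\<close> at \<open>r\<close>.\<close>

lemma perturbation_step: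
  fixes \<beta> g L K :: real
  assumes "\<beta> < 0" "0 < g" "0 \<le> L" "0 \<le> K"
  obtains t where "0 < t" "t \<le> 1"
    "\<And>a R X Y. 0 \<le> R \<Longrightarrow> 0 < a * a + R \<Longrightarrow>
      (\<And>\<delta>. 0 < \<delta> \<Longrightarrow> 2 * a * X \<le> \<delta> * (a * a) * L + R / \<delta>) \<Longrightarrow>
      Y \<le> K * R \<Longrightarrow> t * (a * a * \<beta> + 2 * a * X + Y) < g * R"
proof -
  define \<delta> where "\<delta> = - \<beta> / (2 * (L + 1))"
  define C where "C = 1 / \<delta> + K"
  define t where "t = min 1 (g / (2 * C))"
  have \<delta>: "0 < \<delta>" "\<delta> * L \<le> - \<beta> / 2"
    using assms by (auto simp: \<delta>_def field_simps)
  then have C: "0 < C" using assms(4) by (simp add: C_def add_pos_nonneg)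
  have t: "0 < t" "t \<le> 1"
    using assms(2) C by (auto simp: t_def)
  have "t * C \<le> g / (2 * C) * C"
    using C by (intro mult_right_mono) (simp_all add: t_def)
  also have "\<dots> = g / 2" using C by simp
  finally have tC: "t * C \<le> g / 2" .
  show ?thesis
  proof (rule that[OF t(1,2)])
    fix a R X Y :: real
    assume R: "0 \<le> R" "0 < a * a + R"
      and X: "\<And>\<delta>. 0 < \<delta> \<Longrightarrow> 2 * a * X \<le> \<delta> * (a * a) * L + R / \<delta>" and Y: "Y \<le> K * R"
    have "\<delta> * (a * a) * L \<le> - \<beta> / 2 * (a * a)"
      using mult_right_mono[OF \<delta>(2), of "a * a"] by (simp add: algebra_simps)
    with X[OF \<delta>(1)] Y have "a * a * \<beta> + 2 * a * X + Y \<le> a * a * \<beta> / 2 + C * R"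
      by (simp add: C_def algebra_simps)
    then have "t * (a * a * \<beta> + 2 * a * X + Y) \<le> t * (a * a * \<beta>) / 2 + (t * C) * R"
      using t(1) by (auto dest: mult_left_mono[of _ _ t] simp: algebra_simps)
    also have "\<dots> \<le> t * (a * a * \<beta>) / 2 + g / 2 * R"
      using mult_right_mono[OF tC R(1)] by simp
    also have "\<dots> < g * R"
      using mult_square_neg_less[OF t(1) assms(1,2) R] by simp
    finally show "t * (a * a * \<beta> + 2 * a * X + Y) < g * R" .
  qed
qed

text \<open>Along \<open>v\<close> the form of \<open>M t\<close> drops to first order in \<open>t\<close>, while the spectral gap of \<open>M\<^sub>0\<close>
  absorbs all directions orthogonal to \<open>v\<close>.\<close>

lemma lambda_max_perturb_less:
  assumes M0: "M0 \<in> carrier_mat n n" "symmetric_upto M0 n" "0 < n"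
    and v: "dotp n v v = 1" "\<forall>i<n. mat_apply M0 n v i = lambda_max M0 * v i"
    and simple: "\<And>u. \<forall>i<n. mat_apply M0 n u i = lambda_max M0 * u i \<Longrightarrow> \<exists>c. \<forall>i<n. u i = c * v i"
    and B: "symmetric_upto B n" "bform B n v v < 0"
    and M: "\<And>t. M t \<in> carrier_mat n n" "\<And>t. symmetric_upto (M t) n"
    and dom: "\<And>t w. 0 < t \<Longrightarrow> t \<le> 1 \<Longrightarrow> bform (M t) n w w \<le> bform M0 n w w + t * bform B n w w"
  obtains t where "0 < t" "t \<le> 1" "lambda_max (M t) < lambda_max M0"
proof -
  define lam where "lam = lambda_max M0"
  obtain g where g: "0 < g" "\<And>r. dotp n v r = 0 \<Longrightarrow> bform M0 n r r \<le> (lam - g) * dotp n r r"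
    using spectral_gap[OF M0 v(1) simple] unfolding lam_def by blast
  have "0 \<le> (\<Sum>i<n. \<Sum>j<n. \<bar>B $$ (i, j)\<bar>)" by (intro sum_nonneg) simp
  then obtain t where t: "0 < t" "t \<le> 1"
    and step: "\<And>a R X Y. 0 \<le> R \<Longrightarrow> 0 < a * a + R \<Longrightarrow>
      (\<And>\<delta>. 0 < \<delta> \<Longrightarrow> 2 * a * X \<le> \<delta> * (a * a) * dotp n (mat_apply B n v) (mat_apply B n v) + R / \<delta>) \<Longrightarrow>
      Y \<le> (\<Sum>i<n. \<Sum>j<n. \<bar>B $$ (i, j)\<bar>) * R \<Longrightarrow>
      t * (a * a * bform B n v v + 2 * a * X + Y) < g * R"
    using perturbation_step[OF B(2) g(1) dotp_self_nonneg] by blast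
  have "lambda_max (M t) < lam"
  proof (rule lambda_max_less[OF M(1,2) M0(3)])
    fix w assume N: "0 < dotp n w w"
    define a where "a = dotp n v w"
    define r where "r = (\<lambda>i. w i - a * v i)"
    note split_M0 = orthogonal_split[OF M0(2) v(1) a_def r_def]
    note split_B = orthogonal_split[OF B(1) v(1) a_def r_def]
    have "bform M0 n r v = lam * dotp n r v"
      using bform_eigen_right[OF v(2)] by (simp add: lam_def)
    then have "dotp n r (mat_apply M0 n v) = 0"
      using split_M0(1) by (simp add: bform_eq_dotp_mat_apply dotp_commute)
    with split_M0(3) bform_eigen_right[OF v(2), of v] v(1)
    have M0w: "bform M0 n w w = lam * (a * a) + bform M0 n r r" by (simp add: lam_def)
    have "bform M0 n r r \<le> lam * dotp n r r - g * dotp n r r"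
      using g(2)[OF split_M0(1)] by (simp add: algebra_simps)
    moreover have "t * bform B n w w < g * dotp n r r"
      unfolding split_B(3) using N split_M0(2)
      by (intro step two_mult_dotp_le dotp_self_nonneg) (use abs_bform_self_le[of B n r] in auto)
    moreover have "lam * dotp n w w = lam * (a * a) + lam * dotp n r r"
      using split_M0(2) by (simp add: algebra_simps)
    ultimately have "bform M0 n w w + t * bform B n w w < lam * dotp n w w"
      using M0w by linarith
    with dom[OF t] show "bform (M t) n w w < lam * dotp n w w"
      by (meson order_le_less_trans)
  qed
  with t that show ?thesis unfolding lam_def by blast
qed

section \<open>The conditional and the efficient covariance\<close>

definition obs_score :: "nat pmf \<Rightarrow> nat pmf \<Rightarrow> nat \<Rightarrow> nat \<times> bool \<Rightarrow> real" where
  "obs_score PT PC k = (\<lambda>(s, d). surv PT k * xi PT PC k s d)"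

lemma obs_score_bounded: "\<exists>B. \<forall>ob. \<bar>obs_score PT PC k ob\<bar> \<le> B"
proof -
  define B where "B = (\<Sum>i\<le>k. (1 + \<bar>hazS PT PC i\<bar>) / \<bar>surv PT i * censGm PT PC i\<bar>)"
  have "\<bar>xi PT PC k s d\<bar> \<le> B" for s d
    unfolding xi_def B_def
  proof (rule order_trans[OF sum_abs], intro sum_mono)
    fix i
    have "\<bar>(if s = i \<and> d then 1 else 0) - (if i \<le> s then 1 else 0) * hazS PT PC i\<bar>
        \<le> 1 + \<bar>hazS PT PC i\<bar>"
      by auto
    then show "\<bar>((if s = i \<and> d then 1 else 0) - (if i \<le> s then 1 else 0) * hazS PT PC i) /
        (surv PT i * censGm PT PC i)\<bar> \<le> (1 + \<bar>hazS PT PC i\<bar>) / \<bar>surv PT i * censGm PT PC i\<bar>"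
      unfolding abs_divide by (rule divide_right_mono) simp
  qed
  then have "\<bar>obs_score PT PC k ob\<bar> \<le> \<bar>surv PT k\<bar> * B" for ob
    by (cases ob) (simp add: obs_score_def abs_mult mult_left_mono)
  then show ?thesis by blast
qed

lemma integrable_measure_pmf_bounded:
  fixes f :: "'a \<Rightarrow> real"
  assumes "\<And>x. \<bar>f x\<bar> \<le> B"
  shows "integrable (measure_pmf p) f"
  by (rule measure_pmf.integrable_const_bound[where B = B]) (use assms in auto)

lemma integrable_obs_score: "integrable (measure_pmf p) (obs_score PT PC k)"
  using obs_score_bounded integrable_measure_pmf_bounded by metis

lemma integrable_obs_score_mult:
  "integrable (measure_pmf p) (\<lambda>ob. obs_score PT PC i ob * obs_score PT PC j ob)"
proof -
  obtain B B' where B: "\<And>ob. \<bar>obs_score PT PC i ob\<bar> \<le> B" and B': "\<And>ob. \<bar>obs_score PT PC j ob\<bar> \<le> B'"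
    using obs_score_bounded by metis
  have "0 \<le> B" using order_trans[OF abs_ge_zero B] .
  have "\<bar>obs_score PT PC i ob * obs_score PT PC j ob\<bar> \<le> B * B'" for ob
    unfolding abs_mult by (rule mult_mono[OF B B' \<open>0 \<le> B\<close> abs_ge_zero])
  then show ?thesis by (rule integrable_measure_pmf_bounded)
qed

lemma Sigma_cond_carrier: "Sigma_cond tmax PT PC \<in> carrier_mat (Suc tmax) (Suc tmax)"
  unfolding Sigma_cond_def by simp

lemma Sigma_cond_nth:
  assumes "i < Suc tmax" "j < Suc tmax"
  shows "Sigma_cond tmax PT PC $$ (i, j) =
    measure_pmf.expectation (obs_pmf PT PC) (\<lambda>ob. obs_score PT PC i ob * obs_score PT PC j ob)
    - measure_pmf.expectation (obs_pmf PT PC) (obs_score PT PC i)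
      * measure_pmf.expectation (obs_pmf PT PC) (obs_score PT PC j)"
  using assms unfolding Sigma_cond_def obs_score_def by (simp add: Let_def)

lemma Sigma_cond_symmetric: "symmetric_upto (Sigma_cond tmax PT PC) (Suc tmax)"
  unfolding symmetric_upto_def by (simp add: Sigma_cond_nth mult.commute)

text \<open>\<open>Sigma_cond\<close> is the covariance matrix of the scores, so its form at \<open>u\<close> is the variance
  of \<open>\<Sum>i. u i * obs_score i\<close>.\<close>

lemma bform_Sigma_cond_nonneg: "0 \<le> bform (Sigma_cond tmax PT PC) (Suc tmax) u u"
proof -
  define n where "n = Suc tmax"
  define p where "p = obs_pmf PT PC"
  define Y where "Y = obs_score PT PC"
  define Z where "Z = (\<lambda>ob. \<Sum>i<n. u i * Y i ob)"
  have Z2: "(\<lambda>ob. (Z ob)\<^sup>2) = (\<lambda>ob. \<Sum>i<n. \<Sum>j<n. u i * u j * (Y i ob * Y j ob))"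
    unfolding Z_def power2_eq_square sum_product by (simp add: ac_simps)
  have int_Y: "integrable (measure_pmf p) (Y i)" "integrable (measure_pmf p) (\<lambda>ob. Y i ob * Y j ob)" for i j
    unfolding p_def Y_def by (rule integrable_obs_score integrable_obs_score_mult)+
  have int_Z: "integrable (measure_pmf p) Z"
    unfolding Z_def by (intro Bochner_Integration.integrable_sum integrable_mult_right int_Y)
  have int_Z2: "integrable (measure_pmf p) (\<lambda>ob. (Z ob)\<^sup>2)"
    unfolding Z2 by (intro Bochner_Integration.integrable_sum integrable_mult_right int_Y)
  have EZ: "measure_pmf.expectation p Z = (\<Sum>i<n. u i * measure_pmf.expectation p (Y i))"
    unfolding Z_def by (simp add: Bochner_Integration.integral_sum int_Y)
  have EZ2: "measure_pmf.expectation p (\<lambda>ob. (Z ob)\<^sup>2)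
      = (\<Sum>i<n. \<Sum>j<n. u i * u j * measure_pmf.expectation p (\<lambda>ob. Y i ob * Y j ob))"
    unfolding Z2 by (simp add: Bochner_Integration.integral_sum Bochner_Integration.integrable_sum int_Y)
  have "bform (Sigma_cond tmax PT PC) n u u
      = (\<Sum>i<n. \<Sum>j<n. u i * u j * measure_pmf.expectation p (\<lambda>ob. Y i ob * Y j ob))
        - (\<Sum>i<n. u i * measure_pmf.expectation p (Y i))
          * (\<Sum>j<n. u j * measure_pmf.expectation p (Y j))"
    unfolding bform_def sum_product sum_subtractf[symmetric]
    by (intro sum.cong refl) (simp add: Sigma_cond_nth n_def p_def Y_def algebra_simps)
  also have "\<dots> = measure_pmf.variance p Z"
    by (subst measure_pmf.variance_eq[OF int_Z int_Z2], simp only: EZ EZ2)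
      (simp add: power2_eq_square)
  finally have "bform (Sigma_cond tmax PT PC) n u u = measure_pmf.variance p Z" .
  then show ?thesis
    using measure_pmf.variance_positive unfolding n_def by simp
qed

lemma Sigma_eff_carrier: "Sigma_eff tmax PX QT QC \<pi> \<in> carrier_mat (Suc tmax) (Suc tmax)"
  unfolding Sigma_eff_def by simp

lemma Sigma_eff_nth:
  assumes "i < Suc tmax" "j < Suc tmax"
  shows "Sigma_eff tmax PX QT QC \<pi> $$ (i, j) =
     (\<integral>x. Sigma_cond tmax (QT x True) (QC x True) $$ (i, j) / \<pi> x
         + Sigma_cond tmax (QT x False) (QC x False) $$ (i, j) / (1 - \<pi> x) \<partial>PX)
     + (\<integral>x. bvec PX QT x i * bvec PX QT x j \<partial>PX)"
  using assms unfolding Sigma_eff_def by simp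

lemma Sigma_eff_symmetric: "symmetric_upto (Sigma_eff tmax PX QT QC \<pi>) (Suc tmax)"
  using Sigma_cond_symmetric[of tmax] unfolding symmetric_upto_def
  by (simp add: Sigma_eff_nth mult.commute)

lemma integrable_divide_bounded_below:
  fixes f g :: "'a \<Rightarrow> real"
  assumes f: "integrable M f" and g: "g \<in> borel_measurable M"
    and "0 < c" and c: "\<And>x. x \<in> space M \<Longrightarrow> c \<le> g x"
  shows "integrable M (\<lambda>x. f x / g x)"
proof (rule Bochner_Integration.integrable_bound[of M "\<lambda>x. f x / c"])
  show "integrable M (\<lambda>x. f x / c)" using f by simp
  show "(\<lambda>x. f x / g x) \<in> borel_measurable M"
    using borel_measurable_integrable[OF f] g by measurable
  show "AE x in M. norm (f x / g x) \<le> norm (f x / c)"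
  proof (rule AE_I2)
    fix x assume "x \<in> space M"
    with c \<open>0 < c\<close> have "c \<le> \<bar>g x\<bar>" by force
    with \<open>0 < c\<close> show "norm (f x / g x) \<le> norm (f x / c)"
      by (simp add: abs_divide frac_le)
  qed
qed

definition ipw_variance :: "real \<Rightarrow> real \<Rightarrow> real \<Rightarrow> real" where
  "ipw_variance q1 q0 p = q1 / p + q0 / (1 - p)"

lemma integrable_ipw_variance:
  assumes "integrable PX q1" "integrable PX q0" "\<pi> \<in> Pi_alpha PX \<alpha>" "0 < \<alpha>"
  shows "integrable PX (\<lambda>x. ipw_variance (q1 x) (q0 x) (\<pi> x))"
  using assms unfolding ipw_variance_def Pi_alpha_def
  by (intro Bochner_Integration.integrable_add integrable_divide_bounded_below[where c = \<alpha>]) auto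

definition arm_form :: "nat \<Rightarrow> ('x \<Rightarrow> bool \<Rightarrow> nat pmf) \<Rightarrow> ('x \<Rightarrow> bool \<Rightarrow> nat pmf)
    \<Rightarrow> (nat \<Rightarrow> real) \<Rightarrow> bool \<Rightarrow> 'x \<Rightarrow> real" where
  "arm_form tmax QT QC u a x = bform (Sigma_cond tmax (QT x a) (QC x a)) (Suc tmax) u u"

lemma arm_form_nonneg: "0 \<le> arm_form tmax QT QC u a x"
  unfolding arm_form_def by (rule bform_Sigma_cond_nonneg)

lemma integrable_arm_form:
  assumes "\<And>i j. i \<le> tmax \<Longrightarrow> j \<le> tmax \<Longrightarrow>
      integrable PX (\<lambda>x. Sigma_cond tmax (QT x a) (QC x a) $$ (i, j))"
  shows "integrable PX (arm_form tmax QT QC u a)"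
  unfolding arm_form_def bform_def
  by (intro Bochner_Integration.integrable_sum integrable_mult_left integrable_mult_right assms) auto

lemma bform_Sigma_eff:
  assumes \<pi>: "\<pi> \<in> Pi_alpha PX \<alpha>" and "0 < \<alpha>"
    and int_Sigma: "\<And>a i j. i \<le> tmax \<Longrightarrow> j \<le> tmax \<Longrightarrow>
      integrable PX (\<lambda>x. Sigma_cond tmax (QT x a) (QC x a) $$ (i, j))"
  shows "bform (Sigma_eff tmax PX QT QC \<pi>) (Suc tmax) u u =
    (\<integral>x. ipw_variance (arm_form tmax QT QC u True x) (arm_form tmax QT QC u False x) (\<pi> x) \<partial>PX)
    + (\<Sum>i<Suc tmax. \<Sum>j<Suc tmax. u i * (\<integral>x. bvec PX QT x i * bvec PX QT x j \<partial>PX) * u j)"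
proof -
  define n where "n = Suc tmax"
  define g where "g = (\<lambda>i j x. u i * ipw_variance (Sigma_cond tmax (QT x True) (QC x True) $$ (i, j))
    (Sigma_cond tmax (QT x False) (QC x False) $$ (i, j)) (\<pi> x) * u j)"
  have int_g: "integrable PX (g i j)" if "i < n" "j < n" for i j
    using that int_Sigma \<pi> \<open>0 < \<alpha>\<close> unfolding g_def n_def
    by (intro integrable_mult_left integrable_mult_right integrable_ipw_variance) auto
  have nth: "Sigma_eff tmax PX QT QC \<pi> $$ (i, j) = (\<integral>x. ipw_variance
      (Sigma_cond tmax (QT x True) (QC x True) $$ (i, j))
      (Sigma_cond tmax (QT x False) (QC x False) $$ (i, j)) (\<pi> x) \<partial>PX)
      + (\<integral>x. bvec PX QT x i * bvec PX QT x j \<partial>PX)" if "i < n" "j < n" for i j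
    using that by (simp add: Sigma_eff_nth n_def ipw_variance_def)
  have "bform (Sigma_eff tmax PX QT QC \<pi>) n u u = (\<Sum>i<n. \<Sum>j<n. integral\<^sup>L PX (g i j))
      + (\<Sum>i<n. \<Sum>j<n. u i * (\<integral>x. bvec PX QT x i * bvec PX QT x j \<partial>PX) * u j)"
    unfolding bform_def sum.distrib[symmetric]
    by (intro sum.cong refl) (simp add: nth g_def algebra_simps)
  also have "(\<Sum>i<n. \<Sum>j<n. integral\<^sup>L PX (g i j)) = (\<Sum>i<n. \<integral>x. (\<Sum>j<n. g i j x) \<partial>PX)"
    by (intro sum.cong refl Bochner_Integration.integral_sum[symmetric] int_g) auto
  also have "\<dots> = (\<integral>x. (\<Sum>i<n. \<Sum>j<n. g i j x) \<partial>PX)"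
    by (intro Bochner_Integration.integral_sum[symmetric] Bochner_Integration.integrable_sum int_g) auto
  also have "(\<lambda>x. \<Sum>i<n. \<Sum>j<n. g i j x) = (\<lambda>x. ipw_variance (arm_form tmax QT QC u True x)
      (arm_form tmax QT QC u False x) (\<pi> x))"
    unfolding g_def ipw_variance_def arm_form_def bform_def n_def[symmetric]
    by (simp add: sum.distrib sum_divide_distrib distrib_left distrib_right)
  finally show ?thesis unfolding n_def .
qed

section \<open>The pointwise objective and its clipped minimiser\<close>

lemma divide_convex_combination_le:
  fixes q p r t :: real
  assumes "0 \<le> q" "0 < p" "0 < r" "0 \<le> t" "t \<le> 1"
  shows "q / ((1 - t) * p + t * r) \<le> (1 - t) * (q / p) + t * (q / r)"
proof -
  have "inverse ((1 - t) * p + t * r) \<le> (1 - t) * inverse p + t * inverse r"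
    using convex_onD[OF convex_on_inverse[OF order_refl convex_real_interval(3)], of t p r] assms
    by simp
  from mult_left_mono[OF this assms(1)] show ?thesis
    by (simp add: divide_inverse algebra_simps)
qed

lemma ipw_variance_convex:
  assumes "0 \<le> q1" "0 \<le> q0" "0 < p" "p < 1" "0 < r" "r < 1" "0 \<le> t" "t \<le> 1"
  shows "ipw_variance q1 q0 ((1 - t) * p + t * r)
    \<le> (1 - t) * ipw_variance q1 q0 p + t * ipw_variance q1 q0 r"
proof -
  have "1 - ((1 - t) * p + t * r) = (1 - t) * (1 - p) + t * (1 - r)"
    by (simp add: algebra_simps)
  then show ?thesis
    using divide_convex_combination_le[of q1 p r t] divide_convex_combination_le[of q0 "1 - p" "1 - r" t]
      assms
    unfolding ipw_variance_def by (simp add: algebra_simps)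
qed

lemma ipw_variance_diff:
  assumes "0 < p" "p < 1" "0 < r" "r < 1"
  shows "ipw_variance (a * a) (b * b) p - ipw_variance (a * a) (b * b) r
    = (p - r) * (b * b * p * r - a * a * (1 - p) * (1 - r)) / (p * r * (1 - p) * (1 - r))"
proof -
  have "p \<noteq> 0" "r \<noteq> 0" "1 - p \<noteq> 0" "1 - r \<noteq> 0" using assms by auto
  then show ?thesis unfolding ipw_variance_def by (simp add: field_simps)
qed

lemma clip_boundary_sign:
  fixes a b \<alpha> p :: real
  assumes "0 \<le> a" "0 \<le> b" "a < \<alpha> * (a + b)" "0 < \<alpha>" "\<alpha> < p" "p \<le> 1 - \<alpha>"
  shows "a * a * (1 - p) * (1 - \<alpha>) < b * b * p * \<alpha>"
proof -
  have h1: "a * (1 - \<alpha>) < b * \<alpha>" using assms(3) by (simp add: algebra_simps)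
  have "a * (1 - p) \<le> a * (1 - \<alpha>)" using assms(1,5) by (intro mult_left_mono) auto
  moreover have "b * \<alpha> \<le> b * p" using assms(2,5) by (intro mult_left_mono) auto
  ultimately have h2: "a * (1 - p) < b * p" using h1 by linarith
  have "p \<le> 1" using assms(4,6) by linarith
  moreover have "\<alpha> \<le> 1" using assms(5,6) by linarith
  ultimately have a1: "0 \<le> a * (1 - p)" and a2: "0 \<le> a * (1 - \<alpha>)" using assms(1) by simp_all
  have "a * (1 - p) * (a * (1 - \<alpha>)) < b * p * (b * \<alpha>)"
    by (rule mult_strict_mono[OF h2 h1]) (use a1 a2 h2 in linarith)+
  then show ?thesis by (simp add: ac_simps)
qed

lemma clip_interior_sign:
  fixes a b c p :: real
  assumes "0 < b" "0 < c" "c * (a + b) = a" "0 < a + b" "p \<noteq> c"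
  shows "0 < (p - c) * (b * b * p * c - a * a * (1 - p) * (1 - c))"
proof -
  have e: "a * (1 - c) = b * c" using assms(3) by (simp add: algebra_simps)
  have "a * a * (1 - p) * (1 - c) = (a * (1 - c)) * (a * (1 - p))" by (simp only: ac_simps)
  then have "b * b * p * c - a * a * (1 - p) * (1 - c) = b * b * p * c - b * c * (a * (1 - p))"
    by (simp only: e)
  also have "\<dots> = b * c * ((a + b) * p - a)"
    by (simp add: algebra_simps)
  also have "\<dots> = b * c * ((a + b) * p - c * (a + b))"
    by (simp only: assms(3))
  also have "\<dots> = (b * c * (a + b)) * (p - c)"
    by (simp add: algebra_simps)
  finally have num: "b * b * p * c - a * a * (1 - p) * (1 - c) = (b * c * (a + b)) * (p - c)" .
  have "(p - c) * ((b * c * (a + b)) * (p - c)) = (b * c * (a + b)) * ((p - c) * (p - c))"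
    by (simp only: ac_simps)
  moreover have "0 < b * c * (a + b)" using assms(1,2,4) by simp
  moreover have "0 < (p - c) * (p - c)"
    using assms(5) zero_less_power2[of "p - c"] by (simp add: power2_eq_square)
  ultimately show ?thesis
    unfolding num by (metis mult_pos_pos)
qed

text \<open>The sign of the numerator in \<open>ipw_variance_diff\<close> at the clipped ratio; the upper boundary
  case is the lower one with the two arms exchanged.\<close>

lemma clip_sign:
  fixes a b \<alpha> p r :: real
  assumes "0 \<le> a" "0 \<le> b" "0 < a + b" "0 < \<alpha>" "\<alpha> \<le> p" "p \<le> 1 - \<alpha>"
    and r: "r = clip \<alpha> (a / (a + b))" and "p \<noteq> r"
  shows "0 < (p - r) * (b * b * p * r - a * a * (1 - p) * (1 - r))"
proof -
  define c where "c = a / (a + b)"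
  have a: "c * (a + b) = a" using assms(3) by (simp add: c_def)
  consider (low) "c < \<alpha>" | (high) "1 - \<alpha> < c" | (mid) "\<alpha> \<le> c" "c \<le> 1 - \<alpha>" by linarith
  then show ?thesis
  proof cases
    case low
    with assms have "r = \<alpha>" "\<alpha> < p" by (auto simp: r clip_def c_def)
    moreover have "a < \<alpha> * (a + b)"
      using mult_strict_right_mono[OF low assms(3)] a by simp
    ultimately show ?thesis
      using clip_boundary_sign[of a b \<alpha> p] assms by simp
  next
    case high
    with assms have "r = 1 - \<alpha>" "p < 1 - \<alpha>" by (auto simp: r clip_def c_def)
    moreover have "b < \<alpha> * (b + a)"
      using mult_strict_right_mono[OF high assms(3)] a by (simp add: algebra_simps)
    ultimately show ?thesis
      using clip_boundary_sign[of b a \<alpha> "1 - p"] assms by (simp add: mult_neg_neg)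
  next
    case mid
    then have r_c: "r = c" by (simp add: r clip_def c_def)
    have "0 < b"
    proof (rule ccontr)
      assume "\<not> 0 < b"
      with assms(2,3) have "c = 1" by (simp add: c_def)
      with mid assms(4) show False by simp
    qed
    with mid assms(3,4) a \<open>p \<noteq> r\<close> show ?thesis
      unfolding r_c by (intro clip_interior_sign) auto
  qed
qed

lemma ipw_variance_clip_less:
  assumes q: "0 \<le> q1" "0 \<le> q0" and pos: "0 < sqrt q1 + sqrt q0"
    and p: "0 < \<alpha>" "\<alpha> \<le> p" "p \<le> 1 - \<alpha>"
    and ne: "p \<noteq> clip \<alpha> (sqrt q1 / (sqrt q1 + sqrt q0))"
  shows "ipw_variance q1 q0 (clip \<alpha> (sqrt q1 / (sqrt q1 + sqrt q0))) < ipw_variance q1 q0 p"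
proof -
  define r where "r = clip \<alpha> (sqrt q1 / (sqrt q1 + sqrt q0))"
  have r: "\<alpha> \<le> r" "r \<le> 1 - \<alpha>" using p by (auto simp: r_def clip_def)
  have sq: "sqrt q1 * sqrt q1 = q1" "sqrt q0 * sqrt q0 = q0" using q by simp_all
  have "0 < (p - r) * (q0 * p * r - q1 * (1 - p) * (1 - r))"
    using clip_sign[of "sqrt q1" "sqrt q0" \<alpha> p r] q pos p ne unfolding sq by (simp add: r_def)
  moreover have "0 < p * r * (1 - p) * (1 - r)" using p r by simp
  ultimately have "0 < ipw_variance q1 q0 p - ipw_variance q1 q0 r"
    using ipw_variance_diff[of p r "sqrt q1" "sqrt q0"] p r unfolding sq by simp
  then show ?thesis by (simp add: r_def)
qed

section \<open>E-optimal policies\<close>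

lemma mixture_Pi_alpha:
  assumes "\<pi> \<in> Pi_alpha PX \<alpha>" "\<pi>' \<in> Pi_alpha PX \<alpha>" "0 \<le> t" "t \<le> 1"
  shows "(\<lambda>x. (1 - t) * \<pi> x + t * \<pi>' x) \<in> Pi_alpha PX \<alpha>"
proof -
  have [measurable]: "\<pi> \<in> borel_measurable PX" "\<pi>' \<in> borel_measurable PX"
    using assms(1,2) by (auto simp: Pi_alpha_def)
  have "\<alpha> \<le> (1 - t) * \<pi> x + t * \<pi>' x \<and> (1 - t) * \<pi> x + t * \<pi>' x \<le> 1 - \<alpha>"
    if "x \<in> space PX" for x
  proof -
    have "\<alpha> \<le> \<pi> x" "\<pi> x \<le> 1 - \<alpha>" "\<alpha> \<le> \<pi>' x" "\<pi>' x \<le> 1 - \<alpha>"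
      using assms(1,2) that by (auto simp: Pi_alpha_def)
    then have "(1 - t) * \<alpha> \<le> (1 - t) * \<pi> x" "t * \<alpha> \<le> t * \<pi>' x"
      "(1 - t) * \<pi> x \<le> (1 - t) * (1 - \<alpha>)" "t * \<pi>' x \<le> t * (1 - \<alpha>)"
      using assms(3,4) by (auto intro: mult_left_mono)
    then show ?thesis by (simp add: algebra_simps)
  qed
  then show ?thesis unfolding Pi_alpha_def by simp measurable
qed

lemma bform_Sigma_eff_mixture_le:
  assumes \<pi>: "\<pi> \<in> Pi_alpha PX \<alpha>" and \<pi>': "\<pi>' \<in> Pi_alpha PX \<alpha>" and "0 < \<alpha>"
    and int_Sigma: "\<And>a i j. i \<le> tmax \<Longrightarrow> j \<le> tmax \<Longrightarrow>
      integrable PX (\<lambda>x. Sigma_cond tmax (QT x a) (QC x a) $$ (i, j))"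
    and t: "0 \<le> t" "t \<le> 1"
  shows "bform (Sigma_eff tmax PX QT QC (\<lambda>x. (1 - t) * \<pi> x + t * \<pi>' x)) (Suc tmax) w w
    \<le> bform (Sigma_eff tmax PX QT QC \<pi>) (Suc tmax) w w
      + t * (bform (Sigma_eff tmax PX QT QC \<pi>') (Suc tmax) w w
        - bform (Sigma_eff tmax PX QT QC \<pi>) (Suc tmax) w w)"
proof -
  define h where "h = (\<lambda>\<rho> x. ipw_variance (arm_form tmax QT QC w True x)
    (arm_form tmax QT QC w False x) (\<rho> x))"
  define \<mu> where "\<mu> = (\<lambda>x. (1 - t) * \<pi> x + t * \<pi>' x)"
  have \<mu>: "\<mu> \<in> Pi_alpha PX \<alpha>" using mixture_Pi_alpha[OF \<pi> \<pi>' t] by (simp add: \<mu>_def)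
  have int: "integrable PX (h \<rho>)" if "\<rho> \<in> Pi_alpha PX \<alpha>" for \<rho>
    unfolding h_def using that \<open>0 < \<alpha>\<close> int_Sigma
    by (intro integrable_ipw_variance integrable_arm_form) auto
  have "h \<mu> x \<le> (1 - t) * h \<pi> x + t * h \<pi>' x" if "x \<in> space PX" for x
    using that \<pi> \<pi>' \<open>0 < \<alpha>\<close> t unfolding h_def \<mu>_def Pi_alpha_def
    by (intro ipw_variance_convex arm_form_nonneg) auto
  then have "integral\<^sup>L PX (h \<mu>) \<le> (\<integral>x. (1 - t) * h \<pi> x + t * h \<pi>' x \<partial>PX)"
    using int[OF \<pi>] int[OF \<pi>'] by (intro integral_mono int[OF \<mu>]) auto
  also have "\<dots> = (1 - t) * integral\<^sup>L PX (h \<pi>) + t * integral\<^sup>L PX (h \<pi>')"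
    using int[OF \<pi>] int[OF \<pi>'] by simp
  finally show ?thesis
    using bform_Sigma_eff[OF _ \<open>0 < \<alpha>\<close> int_Sigma, where u = w] \<mu> \<pi> \<pi>'
    unfolding h_def \<mu>_def by (simp add: algebra_simps)
qed

text \<open>If \<open>\<pi>\<close> gave a smaller form, moving from \<open>\<pi>E\<close> towards \<open>\<pi>\<close> would lower \<open>lambda_max\<close>:
  by convexity of \<open>p \<mapsto> 1/p\<close> the form of \<open>Sigma_eff\<close> along the segment is dominated by the
  linear interpolation, and \<open>lambda_max_perturb_less\<close> applies.\<close>

lemma E_optimal_top_bform_le:
  fixes tmax :: nat
  defines "n \<equiv> Suc tmax"
  assumes opt: "E_optimal tmax PX QT QC \<alpha> \<pi>E" and "0 < \<alpha>"
    and int_Sigma: "\<And>a i j. i \<le> tmax \<Longrightarrow> j \<le> tmax \<Longrightarrow>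
      integrable PX (\<lambda>x. Sigma_cond tmax (QT x a) (QC x a) $$ (i, j))"
    and \<pi>: "\<pi> \<in> Pi_alpha PX \<alpha>"
    and u: "dotp n u u = 1"
      "\<forall>i<n. mat_apply (Sigma_eff tmax PX QT QC \<pi>E) n u i
        = lambda_max (Sigma_eff tmax PX QT QC \<pi>E) * u i"
    and simple: "\<And>w. \<forall>i<n. mat_apply (Sigma_eff tmax PX QT QC \<pi>E) n w i
        = lambda_max (Sigma_eff tmax PX QT QC \<pi>E) * w i \<Longrightarrow> \<exists>c. \<forall>i<n. w i = c * u i"
  shows "bform (Sigma_eff tmax PX QT QC \<pi>E) n u u \<le> bform (Sigma_eff tmax PX QT QC \<pi>) n u u"
proof (rule ccontr)
  assume less: "\<not> ?thesis"
  define M0 where "M0 = Sigma_eff tmax PX QT QC \<pi>E"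
  define B where "B = Sigma_eff tmax PX QT QC \<pi> - M0"
  define M where "M = (\<lambda>t. Sigma_eff tmax PX QT QC (\<lambda>x. (1 - t) * \<pi>E x + t * \<pi> x))"
  have \<pi>E: "\<pi>E \<in> Pi_alpha PX \<alpha>" using opt by (simp add: E_optimal_def)
  have carrier: "Sigma_eff tmax PX QT QC \<rho> \<in> carrier_mat n n" for \<rho>
    unfolding n_def by (rule Sigma_eff_carrier)
  have symmetric: "symmetric_upto (Sigma_eff tmax PX QT QC \<rho>) n" for \<rho>
    unfolding n_def by (rule Sigma_eff_symmetric)
  have bform_B: "bform B n w w = bform (Sigma_eff tmax PX QT QC \<pi>) n w w - bform M0 n w w" for w
    unfolding B_def M0_def by (rule bform_diff[OF carrier carrier])
  obtain t where t: "0 < t" "t \<le> 1" "lambda_max (M t) < lambda_max M0"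
  proof (rule lambda_max_perturb_less[of M0 n u B M])
    show "symmetric_upto B n"
      unfolding B_def M0_def by (intro symmetric_upto_minus carrier symmetric)
    show "bform B n u u < 0" using less by (simp add: bform_B M0_def)
    show "bform (M t) n w w \<le> bform M0 n w w + t * bform B n w w" if "0 < t" "t \<le> 1" for t w
      using bform_Sigma_eff_mixture_le[where QT = QT and QC = QC, OF \<pi>E \<pi> \<open>0 < \<alpha>\<close> int_Sigma,
          where t = t and w = w] that
      by (simp add: M_def M0_def bform_B[unfolded n_def] n_def)
  qed (use u simple carrier symmetric in \<open>simp_all add: M0_def M_def n_def\<close>)
  moreover have "lambda_max M0 \<le> lambda_max (M t)"
    using opt mixture_Pi_alpha[OF \<pi>E \<pi>, of t] t unfolding E_optimal_def M0_def M_def by simp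
  ultimately show False by simp
qed

definition clip_policy :: "real \<Rightarrow> ('x \<Rightarrow> real) \<Rightarrow> ('x \<Rightarrow> real) \<Rightarrow> ('x \<Rightarrow> real) \<Rightarrow> 'x \<Rightarrow> real" where
  "clip_policy \<alpha> q1 q0 \<pi> x = (if 0 < sqrt (q1 x) + sqrt (q0 x)
     then clip \<alpha> (sqrt (q1 x) / (sqrt (q1 x) + sqrt (q0 x))) else \<pi> x)"

lemma clip_policy_Pi_alpha:
  assumes \<pi>: "\<pi> \<in> Pi_alpha PX \<alpha>" and [measurable]: "q1 \<in> borel_measurable PX" "q0 \<in> borel_measurable PX"
  shows "clip_policy \<alpha> q1 q0 \<pi> \<in> Pi_alpha PX \<alpha>"
proof -
  have [measurable]: "\<pi> \<in> borel_measurable PX" using \<pi> by (simp add: Pi_alpha_def)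
  have "clip_policy \<alpha> q1 q0 \<pi> \<in> borel_measurable PX"
    unfolding clip_policy_def[abs_def] clip_def by measurable
  moreover have "\<alpha> \<le> clip_policy \<alpha> q1 q0 \<pi> x \<and> clip_policy \<alpha> q1 q0 \<pi> x \<le> 1 - \<alpha>"
    if "x \<in> space PX" for x
    using \<pi> that by (auto simp: Pi_alpha_def clip_policy_def clip_def)
  ultimately show ?thesis by (simp add: Pi_alpha_def)
qed

lemma ipw_variance_clip_policy_le:
  assumes "0 \<le> q1 x" "0 \<le> q0 x" "0 < \<alpha>" "\<alpha> \<le> \<pi> x" "\<pi> x \<le> 1 - \<alpha>"
  shows "ipw_variance (q1 x) (q0 x) (clip_policy \<alpha> q1 q0 \<pi> x) \<le> ipw_variance (q1 x) (q0 x) (\<pi> x)"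
    and "0 < sqrt (q1 x) + sqrt (q0 x) \<Longrightarrow> \<pi> x \<noteq> clip \<alpha> (sqrt (q1 x) / (sqrt (q1 x) + sqrt (q0 x))) \<Longrightarrow>
      ipw_variance (q1 x) (q0 x) (clip_policy \<alpha> q1 q0 \<pi> x) < ipw_variance (q1 x) (q0 x) (\<pi> x)"
proof -
  show less: "ipw_variance (q1 x) (q0 x) (clip_policy \<alpha> q1 q0 \<pi> x) < ipw_variance (q1 x) (q0 x) (\<pi> x)"
    if "0 < sqrt (q1 x) + sqrt (q0 x)" "\<pi> x \<noteq> clip \<alpha> (sqrt (q1 x) / (sqrt (q1 x) + sqrt (q0 x)))"
    using ipw_variance_clip_less[OF assms(1,2) that(1) assms(3-5) that(2)] that(1)
    by (simp add: clip_policy_def)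
  then show "ipw_variance (q1 x) (q0 x) (clip_policy \<alpha> q1 q0 \<pi> x) \<le> ipw_variance (q1 x) (q0 x) (\<pi> x)"
    by (cases "\<pi> x = clip \<alpha> (sqrt (q1 x) / (sqrt (q1 x) + sqrt (q0 x)))")
      (auto simp: clip_policy_def intro: less_imp_le)
qed

lemma integral_ipw_variance_clip_policy_less:
  fixes PX :: "'x measure" and \<pi> q1 q0 :: "'x \<Rightarrow> real"
  assumes \<pi>: "\<pi> \<in> Pi_alpha PX \<alpha>" and "0 < \<alpha>"
    and q: "integrable PX q1" "integrable PX q0" "\<And>x. 0 \<le> q1 x" "\<And>x. 0 \<le> q0 x"
    and not_clip: "\<not> (AE x in PX. 0 < sqrt (q1 x) + sqrt (q0 x) \<longrightarrow>
      \<pi> x = clip \<alpha> (sqrt (q1 x) / (sqrt (q1 x) + sqrt (q0 x))))"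
  shows "(\<integral>x. ipw_variance (q1 x) (q0 x) (clip_policy \<alpha> q1 q0 \<pi> x) \<partial>PX)
    < (\<integral>x. ipw_variance (q1 x) (q0 x) (\<pi> x) \<partial>PX)"
proof -
  define d where "d = (\<lambda>x. ipw_variance (q1 x) (q0 x) (\<pi> x)
    - ipw_variance (q1 x) (q0 x) (clip_policy \<alpha> q1 q0 \<pi> x))"
  have \<rho>: "clip_policy \<alpha> q1 q0 \<pi> \<in> Pi_alpha PX \<alpha>"
    using q by (intro clip_policy_Pi_alpha[OF \<pi>] borel_measurable_integrable)
  have int: "integrable PX (\<lambda>x. ipw_variance (q1 x) (q0 x) (\<rho> x))" if "\<rho> \<in> Pi_alpha PX \<alpha>" for \<rho>
    using q(1,2) that \<open>0 < \<alpha>\<close> by (rule integrable_ipw_variance)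
  have d: "0 \<le> d x" "0 < sqrt (q1 x) + sqrt (q0 x) \<Longrightarrow>
      \<pi> x \<noteq> clip \<alpha> (sqrt (q1 x) / (sqrt (q1 x) + sqrt (q0 x))) \<Longrightarrow> 0 < d x"
    if "x \<in> space PX" for x
    using ipw_variance_clip_policy_le[of q1 x q0 \<alpha> \<pi>]
      q(3,4) \<open>0 < \<alpha>\<close> \<pi> that
    by (auto simp: d_def Pi_alpha_def)
  have "integral\<^sup>L PX d \<noteq> 0"
  proof
    assume "integral\<^sup>L PX d = 0"
    then have "AE x in PX. d x = 0"
      using d(1) unfolding d_def by (subst integral_nonneg_eq_0_iff_AE[symmetric])
        (auto intro!: int \<pi> \<rho> AE_I2)
    from this AE_space have "AE x in PX. 0 < sqrt (q1 x) + sqrt (q0 x) \<longrightarrow>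
        \<pi> x = clip \<alpha> (sqrt (q1 x) / (sqrt (q1 x) + sqrt (q0 x)))"
    proof eventually_elim
      case (elim x)
      with d(2)[of x] show ?case by auto
    qed
    with not_clip show False by blast
  qed
  moreover have "0 \<le> integral\<^sup>L PX d" using d(1) by (intro Bochner_Integration.integral_nonneg) auto
  ultimately show ?thesis
    using int[OF \<pi>] int[OF \<rho>] unfolding d_def by simp
qed

lemma E_optimal_AE_clip:
  assumes opt: "E_optimal tmax PX QT QC \<alpha> \<pi>E" and "0 < \<alpha>"
    and int_Sigma: "\<And>a i j. i \<le> tmax \<Longrightarrow> j \<le> tmax \<Longrightarrow>
      integrable PX (\<lambda>x. Sigma_cond tmax (QT x a) (QC x a) $$ (i, j))"
    and u: "dotp (Suc tmax) u u = 1"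
      "\<forall>i<Suc tmax. mat_apply (Sigma_eff tmax PX QT QC \<pi>E) (Suc tmax) u i
        = lambda_max (Sigma_eff tmax PX QT QC \<pi>E) * u i"
    and simple: "\<And>w. \<forall>i<Suc tmax. mat_apply (Sigma_eff tmax PX QT QC \<pi>E) (Suc tmax) w i
        = lambda_max (Sigma_eff tmax PX QT QC \<pi>E) * w i \<Longrightarrow> \<exists>c. \<forall>i<Suc tmax. w i = c * u i"
  shows "AE x in PX.
    0 < sqrt (arm_form tmax QT QC u True x) + sqrt (arm_form tmax QT QC u False x) \<longrightarrow>
    \<pi>E x = clip \<alpha> (sqrt (arm_form tmax QT QC u True x)
      / (sqrt (arm_form tmax QT QC u True x) + sqrt (arm_form tmax QT QC u False x)))"
    (is "AE x in PX. ?clipped x")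
proof (rule ccontr)
  let ?q = "arm_form tmax QT QC u"
  let ?\<rho> = "clip_policy \<alpha> (?q True) (?q False) \<pi>E"
  have \<pi>E: "\<pi>E \<in> Pi_alpha PX \<alpha>" using opt by (simp add: E_optimal_def)
  have q: "integrable PX (?q a)" "0 \<le> ?q a x" for a x
    using int_Sigma by (auto intro: integrable_arm_form arm_form_nonneg)
  have \<rho>: "?\<rho> \<in> Pi_alpha PX \<alpha>"
    using q(1) by (intro clip_policy_Pi_alpha[OF \<pi>E] borel_measurable_integrable)
  assume "\<not> (AE x in PX. ?clipped x)"
  then have "(\<integral>x. ipw_variance (?q True x) (?q False x) (?\<rho> x) \<partial>PX)
      < (\<integral>x. ipw_variance (?q True x) (?q False x) (\<pi>E x) \<partial>PX)"
    by (intro integral_ipw_variance_clip_policy_less[OF \<pi>E \<open>0 < \<alpha>\<close>] q)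
  then have "bform (Sigma_eff tmax PX QT QC ?\<rho>) (Suc tmax) u u
      < bform (Sigma_eff tmax PX QT QC \<pi>E) (Suc tmax) u u"
    using bform_Sigma_eff[where QT = QT and QC = QC and u = u, OF \<pi>E \<open>0 < \<alpha>\<close> int_Sigma]
      bform_Sigma_eff[where QT = QT and QC = QC and u = u, OF \<rho> \<open>0 < \<alpha>\<close> int_Sigma]
    by simp
  with E_optimal_top_bform_le[OF opt \<open>0 < \<alpha>\<close> int_Sigma \<rho> u simple] show False by simp
qed

theorem theorem4:
  fixes tmax :: nat and PX :: "'x measure" and QT QC :: "'x \<Rightarrow> bool \<Rightarrow> nat pmf"
    and \<alpha> :: real and \<pi>E :: "'x \<Rightarrow> real"
  assumes PX: "prob_space PX"
    and alpha_pos: "0 < \<alpha>"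
    and Pi_ne: "Pi_alpha PX \<alpha> \<noteq> {}"
    and meas_T: "\<And>a s. (\<lambda>x. pmf (QT x a) s) \<in> borel_measurable PX"
    and meas_C: "\<And>a s. (\<lambda>x. pmf (QC x a) s) \<in> borel_measurable PX"
    and integrable_Sigma: "\<And>a i j. i \<le> tmax \<Longrightarrow> j \<le> tmax \<Longrightarrow>
          integrable PX (\<lambda>x. Sigma_cond tmax (QT x a) (QC x a) $$ (i, j))"
    and assm2: "AE x in PX. \<forall>a. \<forall>t\<le>tmax.
          censGm (QT x a) (QC x a) t > 0 \<and> survm (QT x a) t > 0"
    and opt: "E_optimal tmax PX QT QC \<alpha> \<pi>E"
    and simple_top: "\<And>v w. eigenvector (Sigma_eff tmax PX QT QC \<pi>E) v
                                (lambda_max (Sigma_eff tmax PX QT QC \<pi>E)) \<Longrightarrow>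
                            eigenvector (Sigma_eff tmax PX QT QC \<pi>E) w
                                (lambda_max (Sigma_eff tmax PX QT QC \<pi>E)) \<Longrightarrow>
                            \<exists>c. w = c \<cdot>\<^sub>v v"
  shows "\<forall>v. eigenvector (Sigma_eff tmax PX QT QC \<pi>E) v (lambda_max (Sigma_eff tmax PX QT QC \<pi>E))
             \<and> v \<bullet> v = 1 \<longrightarrow>
           (AE x in PX.
              let q1 = v \<bullet> (Sigma_cond tmax (QT x True) (QC x True) *\<^sub>v v);
                  q0 = v \<bullet> (Sigma_cond tmax (QT x False) (QC x False) *\<^sub>v v)
              in sqrt q1 + sqrt q0 > 0 \<longrightarrow> \<pi>E x = clip \<alpha> (sqrt q1 / (sqrt q1 + sqrt q0)))"
proof (intro allI impI)
  fix v :: "real vec"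
  assume v: "eigenvector (Sigma_eff tmax PX QT QC \<pi>E) v (lambda_max (Sigma_eff tmax PX QT QC \<pi>E))
    \<and> v \<bullet> v = 1"
  define M where "M = Sigma_eff tmax PX QT QC \<pi>E"
  have M: "M \<in> carrier_mat (Suc tmax) (Suc tmax)" unfolding M_def by (rule Sigma_eff_carrier)
  have ev: "eigenvector M v (lambda_max M)" using v by (simp add: M_def)
  have v_carrier: "v \<in> carrier_vec (Suc tmax)" by (rule eigenvector_carrier_vec[OF M ev])
  have unit: "dotp (Suc tmax) (vec_index v) (vec_index v) = 1"
    using v v_carrier scalar_prod_eq_dotp[of v "Suc tmax" v] by simp
  have eigen: "\<forall>i<Suc tmax. mat_apply M (Suc tmax) (vec_index v) i = lambda_max M * vec_index v i"
    by (rule eigenvector_mat_apply[OF M ev])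
  have simple: "\<And>w. \<forall>i<Suc tmax. mat_apply M (Suc tmax) w i = lambda_max M * w i \<Longrightarrow>
      \<exists>c. \<forall>i<Suc tmax. w i = c * vec_index v i"
    by (rule simple_eigenvalue_mat_apply[OF M ev simple_top[OF v[THEN conjunct1], folded M_def]])
  from E_optimal_AE_clip[OF opt alpha_pos integrable_Sigma unit eigen[unfolded M_def]
      simple[unfolded M_def]]
  show "AE x in PX. let q1 = v \<bullet> (Sigma_cond tmax (QT x True) (QC x True) *\<^sub>v v);
      q0 = v \<bullet> (Sigma_cond tmax (QT x False) (QC x False) *\<^sub>v v)
    in sqrt q1 + sqrt q0 > 0 \<longrightarrow> \<pi>E x = clip \<alpha> (sqrt q1 / (sqrt q1 + sqrt q0))"
    using scalar_prod_mult_mat_vec_eq_bform[OF Sigma_cond_carrier v_carrier]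
    by (simp add: Let_def arm_form_def)
qed

end
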